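(* Let $n,m\ge 1$, $I=\{1,\dots,m\}$, and let $f(x)=x^TAx+a^Tx+\alpha$ and $g_i(x)=x^TB_ix+b_i^Tx+\beta_i$ ($i\in I$) be functions on $\mathbb{R}^n$, where $A$ is a real symmetric $n\times n$ matrix, each $B_i$ is a real symmetric positive semidefinite $n\times n$ matrix, $a,b_i\in\mathbb{R}^n$ and $\alpha,\beta_i\in\mathbb{R}$. Suppose there exist $i_0\in I$ and $\lambda\in\mathbb{R}$ such that $B_{i_0}\succ 0$ and (H1) $A+\lambda B_{i_0}\succeq 0$; (H2) there exists a nonzero $v\in\mathbb{R}^n$ with $(A+\lambda B_{i_0})v=0$, $(a+\lambda b_{i_0})^Tv\le 0$, and $B_iv=0$, $b_i^Tv\le 0$ for all $i\in I_0:=I\setminus\{i_0\}$. Then the set $\mathrm{U}(f,g_1,\dots,g_m)$ is convex.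
   Context: $\mathrm{U}(f,g_1,\dots,g_m):=\{(f(x),g_1(x),\dots,g_m(x)) : x\in\mathbb{R}^n\}+\mathbb{R}^{m+1}_+\subset\mathbb{R}^{m+1}$. Condition (H2) is the paper's condition that the recession cone of the convex set $\{x: f(x)+\lambda g_{i_0}(x)\le 0,\ g_i(x)\le 0,\ i\in I_0\}$ is different from $\{0\}$; when this set is nonempty, its recession cone equals $\{v: (A+\lambda B_{i_0})v=0,\ (a+\lambda b_{i_0})^Tv\le0,\ B_iv=0,\ b_i^Tv\le 0,\ i\in I_0\}$. $M\succeq 0$ (resp. $M\succ 0$) means $M$ is positive semidefinite (resp. positive definite). *)

theory Defs
  imports "HOL-Analysis.Analysis"
begin

definition quadf :: "real^'n^'n \<Rightarrow> real^'n \<Rightarrow> real \<Rightarrow> real^'n \<Rightarrow> real" where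
  "quadf M c d x = x \<bullet> (M *v x) + c \<bullet> x + d"

definition symmetric_mat :: "real^'n^'n \<Rightarrow> bool" where
  "symmetric_mat M \<longleftrightarrow> transpose M = M"

definition psd :: "real^'n^'n \<Rightarrow> bool" where
  "psd M \<longleftrightarrow> (\<forall>x. 0 \<le> x \<bullet> (M *v x))"

definition pd :: "real^'n^'n \<Rightarrow> bool" where
  "pd M \<longleftrightarrow> (\<forall>x. x \<noteq> 0 \<longrightarrow> 0 < x \<bullet> (M *v x))"

text \<open>Nonnegative orthant of R^{m+1} = R x R^m (first coordinate for f, index i for g_i).\<close>
definition orthant :: "(real \<times> (real^'m)) set" where
  "orthant = {q. 0 \<le> fst q \<and> (\<forall>i. 0 \<le> snd q $ i)}"

definition Uset :: "('n \<Rightarrow> real) \<Rightarrow> ('m \<Rightarrow> 'n \<Rightarrow> real) \<Rightarrow> (real \<times> (real^'m)) set" where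
  "Uset f g = {p + q | p q. p \<in> range (\<lambda>x. (f x, \<chi> i. g i x)) \<and> q \<in> orthant}"

end

theory Submission
  imports Defs
begin

text \<open>Let \<open>v\<close> be the direction of (H2) and \<open>L = f + \<lambda> g\<^sub>i\<^sub>0\<close>. Both \<open>L\<close> and all \<open>g\<^sub>i\<close> are
  convex; along \<open>v\<close> neither \<open>L\<close> nor any \<open>g\<^sub>i\<close> with \<open>i \<noteq> i\<^sub>0\<close> increases, while \<open>g\<^sub>i\<^sub>0\<close> grows
  without bound because \<open>B\<^sub>i\<^sub>0 \<succ> 0\<close>. Given a convex combination \<open>x\<^sub>t\<close> of \<open>x\<^sub>1, x\<^sub>2\<close>, move
  from \<open>x\<^sub>t\<close> along \<open>v\<close> until \<open>g\<^sub>i\<^sub>0\<close> equals the convex combination of its values at \<open>x\<^sub>1, x\<^sub>2\<close>;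
  there \<open>f = L - \<lambda> g\<^sub>i\<^sub>0\<close> and every \<open>g\<^sub>i\<close> lie below their convex combinations, and this
  domination of convex combinations is what convexity of \<open>U\<close> amounts to.\<close>

lemma convex_UsetI:
  fixes f :: "'n \<Rightarrow> real" and g :: "'m::finite \<Rightarrow> 'n \<Rightarrow> real"
  assumes below: "\<And>x1 x2 t. 0 \<le> t \<Longrightarrow> t \<le> 1 \<Longrightarrow>
      \<exists>x. f x \<le> (1 - t) * f x1 + t * f x2 \<and> (\<forall>i. g i x \<le> (1 - t) * g i x1 + t * g i x2)"
  shows "convex (Uset f g)"
  unfolding convex_alt
proof (intro ballI allI impI)
  fix p1 p2 and t :: real
  assume "p1 \<in> Uset f g" "p2 \<in> Uset f g" and t: "0 \<le> t \<and> t \<le> 1"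
  then obtain x1 q1 x2 q2 where p1: "p1 = (f x1, \<chi> i. g i x1) + q1" and q1: "q1 \<in> orthant"
    and p2: "p2 = (f x2, \<chi> i. g i x2) + q2" and q2: "q2 \<in> orthant"
    unfolding Uset_def by blast
  obtain x where fx: "f x \<le> (1 - t) * f x1 + t * f x2"
    and gx: "\<And>i. g i x \<le> (1 - t) * g i x1 + t * g i x2"
    using below t by blast
  define q where "q = (1 - t) *\<^sub>R p1 + t *\<^sub>R p2 - (f x, \<chi> i. g i x)"
  have q_nonneg: "0 \<le> (1 - t) * fst q1 + t * fst q2" "0 \<le> (1 - t) * snd q1 $ i + t * snd q2 $ i"
    for i using q1 q2 t by (simp_all add: orthant_def)
  have "0 \<le> fst q"
    using q_nonneg fx unfolding q_def p1 p2 orthant_def by (simp add: algebra_simps)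
  moreover have "0 \<le> snd q $ i" for i
    using q_nonneg(2)[of i] gx[of i] unfolding q_def p1 p2 orthant_def by (simp add: algebra_simps)
  ultimately have "q \<in> orthant"
    by (simp add: orthant_def)
  moreover have "(1 - t) *\<^sub>R p1 + t *\<^sub>R p2 = (f x, \<chi> i. g i x) + q"
    unfolding q_def by simp
  ultimately show "(1 - t) *\<^sub>R p1 + t *\<^sub>R p2 \<in> Uset f g"
    unfolding Uset_def by blast
qed

lemma exists_below_convex_combination_along_ray:
  fixes f :: "'a::real_vector \<Rightarrow> real" and g :: "'m \<Rightarrow> 'a \<Rightarrow> real"
  assumes convex_L: "convex_on UNIV (\<lambda>x. f x + lam * g i0 x)"
    and convex_g: "\<And>i. convex_on UNIV (g i)"
    and L_ray: "\<And>x s. 0 \<le> s \<Longrightarrow> f (x + s *\<^sub>R w) + lam * g i0 (x + s *\<^sub>R w) \<le> f x + lam * g i0 x"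
    and g_ray: "\<And>i x s. i \<noteq> i0 \<Longrightarrow> 0 \<le> s \<Longrightarrow> g i (x + s *\<^sub>R w) \<le> g i x"
    and g0_ray: "\<And>x D. 0 \<le> D \<Longrightarrow> \<exists>s\<ge>0. g i0 (x + s *\<^sub>R w) = g i0 x + D"
    and t: "0 \<le> t" "t \<le> 1"
  shows "\<exists>x. f x \<le> (1 - t) * f x1 + t * f x2 \<and> (\<forall>i. g i x \<le> (1 - t) * g i x1 + t * g i x2)"
proof -
  define xt where "xt = (1 - t) *\<^sub>R x1 + t *\<^sub>R x2"
  have g_xt: "g i xt \<le> (1 - t) * g i x1 + t * g i x2" for i
    unfolding xt_def using convex_onD[OF convex_g] t by simp
  obtain s where "0 \<le> s"
    and g0_x: "g i0 (xt + s *\<^sub>R w) = (1 - t) * g i0 x1 + t * g i0 x2"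
    using g0_ray[where x = xt and D = "(1 - t) * g i0 x1 + t * g i0 x2 - g i0 xt"] g_xt[of i0] by auto
  define x where "x = xt + s *\<^sub>R w"
  have "f x + lam * g i0 x \<le> f xt + lam * g i0 xt"
    unfolding x_def using L_ray \<open>0 \<le> s\<close> .
  also have "\<dots> \<le> (1 - t) * (f x1 + lam * g i0 x1) + t * (f x2 + lam * g i0 x2)"
    unfolding xt_def using convex_onD[OF convex_L] t by simp
  finally have "f x \<le> (1 - t) * f x1 + t * f x2"
    using g0_x unfolding x_def by (simp add: algebra_simps)
  moreover have "g i x \<le> (1 - t) * g i x1 + t * g i x2" for i
    using g0_x g_ray[where i = i and x = xt and s = s] g_xt[of i] \<open>0 \<le> s\<close> unfolding x_def
    by (cases "i = i0") auto
  ultimately show ?thesis by blast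
qed

lemma symmetric_mat_add_scaleR:
  "symmetric_mat M \<Longrightarrow> symmetric_mat N \<Longrightarrow> symmetric_mat (M + c *\<^sub>R N)"
  by (simp add: symmetric_mat_def transpose_def vec_eq_iff)

lemma quadf_add_scaleR:
  "quadf M c d x + lam * quadf N e h x = quadf (M + lam *\<^sub>R N) (c + lam *\<^sub>R e) (d + lam * h) x"
  unfolding quadf_def
  by (simp add: matrix_vector_mult_add_rdistrib inner_add_left inner_add_right algebra_simps
      flip: scaleR_matrix_vector_assoc)

lemma quadf_along_line:
  "quadf M c d (x + s *\<^sub>R w) =
     quadf M c d x + s * (x \<bullet> (M *v w) + w \<bullet> (M *v x) + c \<bullet> w) + s\<^sup>2 * (w \<bullet> (M *v w))"
  unfolding quadf_def
  by (simp add: matrix_vector_right_distrib matrix_vector_mult_scaleR inner_add_left inner_add_right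
      algebra_simps power2_eq_square)

lemma quadf_along_kernel:
  assumes "symmetric_mat M" "M *v w = 0"
  shows "quadf M c d (x + s *\<^sub>R w) = quadf M c d x + s * (c \<bullet> w)"
proof -
  have "w \<bullet> (M *v x) = (transpose M *v w) \<bullet> x"
    by (simp add: dot_lmul_matrix)
  then have "w \<bullet> (M *v x) = 0"
    using assms by (metis symmetric_mat_def inner_zero_left)
  then show ?thesis
    using assms(2) by (simp add: quadf_along_line)
qed

lemma convex_on_quadf:
  assumes "psd M"
  shows "convex_on UNIV (quadf M c d)"
proof (rule convex_onI)
  fix t :: real and x y
  assume "0 < t" "t < 1"
  then have "0 \<le> t * (1 - t) * ((x - y) \<bullet> (M *v (x - y)))"
    using assms by (simp add: psd_def)
  moreover have "(1 - t) * quadf M c d x + t * quadf M c d y - quadf M c d ((1 - t) *\<^sub>R x + t *\<^sub>R y)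
      = t * (1 - t) * ((x - y) \<bullet> (M *v (x - y)))"
    unfolding quadf_def
    by (simp add: matrix_vector_right_distrib matrix_vector_mult_diff_distrib
        matrix_vector_mult_scaleR inner_add_left inner_add_right inner_diff_left inner_diff_right
        algebra_simps)
  ultimately show "quadf M c d ((1 - t) *\<^sub>R x + t *\<^sub>R y) \<le> (1 - t) * quadf M c d x + t * quadf M c d y"
    by linarith
qed simp

lemma exists_nonneg_root_quadratic:
  fixes a b D :: real
  assumes "0 < a" "0 \<le> D"
  shows "\<exists>s\<ge>0. s * b + s\<^sup>2 * a = D"
proof -
  define r where "r = sqrt (b\<^sup>2 + 4 * a * D)"
  have r2: "r\<^sup>2 = b\<^sup>2 + 4 * a * D"
    unfolding r_def using assms by simp
  have "sqrt (b\<^sup>2) \<le> r"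
    unfolding r_def using assms by (intro real_sqrt_le_mono) simp
  then have "b \<le> r" by simp
  then show ?thesis
    using assms r2 by (intro exI[of _ "(r - b) / (2 * a)"]) (simp add: field_simps power2_eq_square)
qed

lemma quadf_ray_surjective:
  assumes "0 < w \<bullet> (M *v w)" "0 \<le> D"
  shows "\<exists>s\<ge>0. quadf M c d (x + s *\<^sub>R w) = quadf M c d x + D"
  using exists_nonneg_root_quadratic[OF assms, of "x \<bullet> (M *v w) + w \<bullet> (M *v x) + c \<bullet> w"]
  by (simp add: quadf_along_line)

theorem theorem3p1:
  fixes A :: "real^'n^'n" and a :: "real^'n" and alpha :: real
    and B :: "'m::finite \<Rightarrow> real^'n^'n" and b :: "'m \<Rightarrow> real^'n" and beta :: "'m \<Rightarrow> real"
    and i0 :: 'm and lam :: real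
  assumes symA: "symmetric_mat A"
    and symB: "\<And>i. symmetric_mat (B i)"
    and psdB: "\<And>i. psd (B i)"
    and pdB0: "pd (B i0)"
    and H1: "psd (A + lam *\<^sub>R B i0)"
    and H2: "\<exists>v. v \<noteq> 0 \<and> (A + lam *\<^sub>R B i0) *v v = 0 \<and> (a + lam *\<^sub>R b i0) \<bullet> v \<le> 0
                 \<and> (\<forall>i. i \<noteq> i0 \<longrightarrow> B i *v v = 0 \<and> b i \<bullet> v \<le> 0)"
  shows "convex (Uset (quadf A a alpha) (\<lambda>i. quadf (B i) (b i) (beta i)))"
    (is "convex (Uset ?f ?g)")
proof -
  obtain v where "v \<noteq> 0" and kernel_L: "(A + lam *\<^sub>R B i0) *v v = 0"
    and descent_L: "(a + lam *\<^sub>R b i0) \<bullet> v \<le> 0"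
    and kernel_B: "\<And>i. i \<noteq> i0 \<Longrightarrow> B i *v v = 0" and descent_b: "\<And>i. i \<noteq> i0 \<Longrightarrow> b i \<bullet> v \<le> 0"
    using H2 by blast
  have symL: "symmetric_mat (A + lam *\<^sub>R B i0)"
    using symA symB by (rule symmetric_mat_add_scaleR)
  show ?thesis
  proof (intro convex_UsetI exists_below_convex_combination_along_ray[where w = v])
    show "convex_on UNIV (\<lambda>x. ?f x + lam * ?g i0 x)"
      unfolding quadf_add_scaleR using H1 by (rule convex_on_quadf)
    show "convex_on UNIV (?g i)" for i
      using psdB by (rule convex_on_quadf)
    show "?f (x + s *\<^sub>R v) + lam * ?g i0 (x + s *\<^sub>R v) \<le> ?f x + lam * ?g i0 x" if "0 \<le> s" for x s
      unfolding quadf_add_scaleR quadf_along_kernel[OF symL kernel_L]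
      using that descent_L by (simp add: mult_nonneg_nonpos)
    show "?g i (x + s *\<^sub>R v) \<le> ?g i x" if "i \<noteq> i0" "0 \<le> s" for i x s
      unfolding quadf_along_kernel[OF symB kernel_B[OF \<open>i \<noteq> i0\<close>]]
      using that descent_b by (simp add: mult_nonneg_nonpos)
    show "\<exists>s\<ge>0. ?g i0 (x + s *\<^sub>R v) = ?g i0 x + D" if "0 \<le> D" for x D
      using pdB0 \<open>v \<noteq> 0\<close> that by (intro quadf_ray_surjective) (simp_all add: pd_def)
  qed
qed

end
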